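(* When all requests are scheduled by a Byzantine adversary, the algorithm's total RB cost and its total latency due to the $\mathcal{Q}$ good queries are each $$O\Big(\big(\mathcal{I}+\mathcal{Q}+\sqrt{(\mathcal{I}+\mathcal{Q})\,\mathcal{B}}\big)\,\ell_M^2\Big),$$ where this bound includes the cost of the good insertions.
   Context: Model. A hash table has $t$ indices with chaining. The objects at an index form a list, new objects are appended at the tail, and $L_i$ denotes the current number of objects in the list at index $i$. The depth of an object is its position counted from the head of its list (the head has depth $1$). Algorithm \textsc{Depth Charge}: - Inserting at index $i$ costs the inserter an RB (resource-burning) cost of $L_i+1$ and has latency $1$. - Querying a present object at depth $\Delta$ costs $\Delta$, has latency $\Delta$, and then moves the object to the head of its list. - Querying an absent object costs $L_i$. Good objects (inserted by clients) go to uniformly random indices; clients query only good objects. The adversary inserts bad objects at indices of its choice and may query any object. Notation. $\mathcal{I}$ is the number of good insertions. $\mathcal{Q}$ is the number of good queries for objects present in the table. $\mathcal{B}$ is the adversary's total RB cost. $\ell_M$ is the maximum, over indices, of the maximum number of good objects ever present in that index. *)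

theory Defs
  imports Complex_Main
begin

text \<open>Model of the hash table under algorithm Depth Charge.
  Objects are natural numbers, indices are naturals below t.
  The table maps each index to its list (head first).\<close>

datatype op =
    GIns nat nat      \<comment> \<open>good insertion of object x at index i\<close>
  | GQry nat nat      \<comment> \<open>good query of present object x, which lies at index i\<close>
  | BIns nat nat      \<comment> \<open>bad (adversarial) insertion of object x at index i\<close>
  | BQry nat nat      \<comment> \<open>adversarial query of present object x (good or bad) at index i\<close>
  | BQryAbs nat       \<comment> \<open>adversarial query of an absent object hashing to index i\<close>

record st =
  tab   :: "nat \<Rightarrow> nat list"
  goodobj :: "nat set"
  allobj  :: "nat set"
  algc  :: nat                  \<comment> \<open>RB cost paid by the algorithm on good requests\<close>
  lat   :: nat                  \<comment> \<open>latency of good requests\<close>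
  advc  :: nat                  \<comment> \<open>adversary's total RB cost (B)\<close>
  nI    :: nat                  \<comment> \<open>number of good insertions\<close>
  nQ    :: nat                  \<comment> \<open>number of good queries (of present objects)\<close>

definition init :: st where
  "init = \<lparr>tab = (\<lambda>_. []), goodobj = {}, allobj = {}, algc = 0, lat = 0,
           advc = 0, nI = 0, nQ = 0\<rparr>"

text \<open>Depth of x in list xs (head has depth 1).\<close>
definition depth :: "nat \<Rightarrow> nat list \<Rightarrow> nat" where
  "depth x xs = length (takeWhile (\<lambda>y. y \<noteq> x) xs) + 1"

definition mtf :: "nat \<Rightarrow> nat list \<Rightarrow> nat list" where
  "mtf x xs = x # remove1 x xs"

fun step :: "st \<Rightarrow> op \<Rightarrow> st" where
  "step s (GIns x i) = s\<lparr>tab := (tab s)(i := tab s i @ [x]),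
      goodobj := insert x (goodobj s), allobj := insert x (allobj s),
      algc := algc s + (length (tab s i) + 1), lat := lat s + 1, nI := nI s + 1\<rparr>"
| "step s (GQry x i) = s\<lparr>tab := (tab s)(i := mtf x (tab s i)),
      algc := algc s + depth x (tab s i), lat := lat s + depth x (tab s i),
      nQ := nQ s + 1\<rparr>"
| "step s (BIns x i) = s\<lparr>tab := (tab s)(i := tab s i @ [x]),
      allobj := insert x (allobj s), advc := advc s + (length (tab s i) + 1)\<rparr>"
| "step s (BQry x i) = s\<lparr>tab := (tab s)(i := mtf x (tab s i)),
      advc := advc s + depth x (tab s i)\<rparr>"
| "step s (BQryAbs i) = s\<lparr>advc := advc s + length (tab s i)\<rparr>"

fun legal :: "nat \<Rightarrow> st \<Rightarrow> op \<Rightarrow> bool" where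
  "legal t s (GIns x i) = (i < t \<and> x \<notin> allobj s)"
| "legal t s (GQry x i) = (i < t \<and> x \<in> goodobj s \<and> x \<in> set (tab s i))"
| "legal t s (BIns x i) = (i < t \<and> x \<notin> allobj s)"
| "legal t s (BQry x i) = (i < t \<and> x \<in> set (tab s i))"
| "legal t s (BQryAbs i) = (i < t)"

definition run :: "op list \<Rightarrow> st" where
  "run ops = fold (\<lambda>r s. step s r) ops init"

definition valid_run :: "nat \<Rightarrow> op list \<Rightarrow> bool" where
  "valid_run t ops = (\<forall>k < length ops. legal t (run (take k ops)) (ops ! k))"

text \<open>Maximum, over indices, of the number of good objects ever present
  at that index (there are no deletions, so this is the final count).\<close>
definition ellM :: "nat \<Rightarrow> st \<Rightarrow> nat" where
  "ellM t s = Max ((\<lambda>i. length (filter (\<lambda>x. x \<in> goodobj s) (tab s i))) ` {..<t})"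

end

theory Submission
  imports Defs
begin

text \<open>A good request at index i costs at most L + a, where L bounds the good objects in a list
  and a is the number of bad objects ahead of the requested (or, for an insertion, new) object.
  Over the N good requests, Cauchy--Schwarz bounds the sum of the a's by sqrt (N * S) with S the
  sum of their squares, so it remains to charge S to the adversary. The potential of a list is
  the sum, over its good objects, of the squared number of bad objects ahead of them, plus
  2 (L - g) b^2 for g good and b bad objects; it is paid in advance for the squares that later
  good insertions create. A good request of value a releases a^2 of potential, while a bad
  request of cost k raises it by at most 4 L k: a bad insertion only grows the second term, and
  moving a bad object to the front adds at most 2 (bad objects ahead) + 1 for each good object
  it overtakes.\<close>

definition good_count :: "nat set \<Rightarrow> nat list \<Rightarrow> nat" where
  "good_count G xs = length (filter (\<lambda>x. x \<in> G) xs)"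

definition bad_count :: "nat set \<Rightarrow> nat list \<Rightarrow> nat" where
  "bad_count G xs = length (filter (\<lambda>x. x \<notin> G) xs)"

definition bad_ahead :: "nat \<Rightarrow> nat set \<Rightarrow> nat list \<Rightarrow> nat" where
  "bad_ahead x G xs = bad_count G (takeWhile (\<lambda>y. y \<noteq> x) xs)"

text \<open>The sum, over the good objects y of the list, of (b + bad objects ahead of y) squared;
  b accounts for bad objects preceding the list.\<close>
fun bad_ahead_sq_sum :: "nat set \<Rightarrow> nat \<Rightarrow> nat list \<Rightarrow> nat" where
  "bad_ahead_sq_sum G b [] = 0"
| "bad_ahead_sq_sum G b (y # ys) =
     (if y \<in> G then b\<^sup>2 + bad_ahead_sq_sum G b ys else bad_ahead_sq_sum G (Suc b) ys)"

lemma good_count_Cons: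
  "good_count G (y # ys) = (if y \<in> G then Suc (good_count G ys) else good_count G ys)"
  by (simp add: good_count_def)

lemma depth_Cons: "depth x (y # ys) = (if y = x then 1 else Suc (depth x ys))"
  by (simp add: depth_def)

lemma bad_ahead_Cons:
  "bad_ahead x G (y # ys) =
     (if y = x then 0 else if y \<in> G then bad_ahead x G ys else Suc (bad_ahead x G ys))"
  unfolding bad_ahead_def bad_count_def by (cases "y = x") auto

lemma good_count_plus_bad_count: "good_count G xs + bad_count G xs = length xs"
  unfolding good_count_def bad_count_def by (rule sum_length_filter_compl)

lemma good_count_snoc:
  "good_count G (xs @ [x]) = good_count G xs + (if x \<in> G then 1 else 0)"
  by (simp add: good_count_def)

lemma bad_count_snoc: "bad_count G (xs @ [x]) = bad_count G xs + (if x \<in> G then 0 else 1)"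
  by (simp add: bad_count_def)

lemma good_count_mono: "G \<subseteq> G' \<Longrightarrow> good_count G xs \<le> good_count G' xs"
  unfolding good_count_def by (induction xs) auto

lemma length_filter_remove1:
  "x \<in> set xs \<Longrightarrow>
     length (filter P (remove1 x xs)) + (if P x then 1 else 0) = length (filter P xs)"
  by (induction xs) auto

lemma good_count_mtf: "x \<in> set xs \<Longrightarrow> good_count G (mtf x xs) = good_count G xs"
  unfolding good_count_def mtf_def using length_filter_remove1[of x xs "\<lambda>x. x \<in> G"] by auto

lemma bad_count_mtf: "x \<in> set xs \<Longrightarrow> bad_count G (mtf x xs) = bad_count G xs"
  unfolding bad_count_def mtf_def using length_filter_remove1[of x xs "\<lambda>x. x \<notin> G"] by auto

lemma set_mtf: "x \<in> set xs \<Longrightarrow> set (mtf x xs) = set xs"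
  unfolding mtf_def by (induction xs) auto

lemma good_count_insert_notin: "x \<notin> set xs \<Longrightarrow> good_count (insert x G) xs = good_count G xs"
  unfolding good_count_def by (induction xs) auto

lemma bad_count_insert_notin: "x \<notin> set xs \<Longrightarrow> bad_count (insert x G) xs = bad_count G xs"
  unfolding bad_count_def by (induction xs) auto

lemma bad_ahead_sq_sum_insert_notin:
  "x \<notin> set xs \<Longrightarrow> bad_ahead_sq_sum (insert x G) b xs = bad_ahead_sq_sum G b xs"
  by (induction xs arbitrary: b) auto

lemma bad_ahead_sq_sum_snoc:
  "bad_ahead_sq_sum G b (xs @ [x]) =
     bad_ahead_sq_sum G b xs + (if x \<in> G then (b + bad_count G xs)\<^sup>2 else 0)"
  by (induction xs arbitrary: b) (auto simp: bad_count_def)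

lemma depth_le_good_count_plus_bad_ahead:
  "x \<in> G \<Longrightarrow> x \<in> set xs \<Longrightarrow> depth x xs \<le> good_count G xs + bad_ahead x G xs"
  by (induction xs) (auto simp: depth_Cons bad_ahead_Cons good_count_Cons)

lemma bad_ahead_sq_sum_remove1_good:
  "x \<in> G \<Longrightarrow> x \<in> set xs \<Longrightarrow>
     bad_ahead_sq_sum G b (remove1 x xs) + (b + bad_ahead x G xs)\<^sup>2 = bad_ahead_sq_sum G b xs"
  by (induction xs arbitrary: b) (auto simp: bad_ahead_Cons simp flip: add_Suc)

lemma bad_ahead_sq_sum_remove1_bad:
  "x \<notin> G \<Longrightarrow> x \<in> set xs \<Longrightarrow>
     bad_ahead_sq_sum G (Suc b) (remove1 x xs)
       \<le> bad_ahead_sq_sum G b xs + 2 * good_count G xs * (b + depth x xs)"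
proof (induction xs arbitrary: b)
  case (Cons y ys)
  show ?case
  proof (cases "y = x")
    case False
    with Cons.prems have "x \<in> set ys" by simp
    with Cons.IH Cons.prems(1) have IH: "\<And>b. bad_ahead_sq_sum G (Suc b) (remove1 x ys)
        \<le> bad_ahead_sq_sum G b ys + 2 * good_count G ys * (b + depth x ys)" by blast
    have "(Suc b)\<^sup>2 \<le> b\<^sup>2 + 2 * (b + Suc (depth x ys))" by (simp add: power2_eq_square)
    with False IH[of b] IH[of "Suc b"] show ?thesis
      by (auto simp: depth_Cons good_count_Cons algebra_simps)
  qed (use Cons.prems in simp)
qed simp

definition list_potential :: "nat \<Rightarrow> nat set \<Rightarrow> nat list \<Rightarrow> nat" where
  "list_potential L G xs =
     bad_ahead_sq_sum G 0 xs + 2 * (L - good_count G xs) * (bad_count G xs)\<^sup>2"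

lemma list_potential_insert_notin:
  "x \<notin> set xs \<Longrightarrow> list_potential L (insert x G) xs = list_potential L G xs"
  by (simp add: list_potential_def good_count_insert_notin bad_count_insert_notin
      bad_ahead_sq_sum_insert_notin)

lemma list_potential_good_snoc:
  assumes "x \<notin> set xs" and "good_count G xs < L"
  shows "list_potential L (insert x G) (xs @ [x]) + (bad_count G xs)\<^sup>2 = list_potential L G xs"
proof -
  have "L - good_count G xs = Suc (L - Suc (good_count G xs))" using assms(2) by simp
  then show ?thesis
    using assms(1) by (simp add: list_potential_def bad_ahead_sq_sum_snoc good_count_snoc
        bad_count_snoc good_count_insert_notin bad_count_insert_notin bad_ahead_sq_sum_insert_notin)
qed

lemma list_potential_good_mtf:
  "x \<in> G \<Longrightarrow> x \<in> set xs \<Longrightarrow>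
     list_potential L G (mtf x xs) + (bad_ahead x G xs)\<^sup>2 = list_potential L G xs"
  using bad_ahead_sq_sum_remove1_good[of x G xs 0]
  by (simp add: list_potential_def good_count_mtf bad_count_mtf) (simp add: mtf_def)

lemma list_potential_bad_snoc:
  assumes "x \<notin> G"
  shows "list_potential L G (xs @ [x]) \<le> list_potential L G xs + 4 * L * (length xs + 1)"
proof -
  define a where "a = bad_count G xs"
  have "a \<le> length xs" using good_count_plus_bad_count[of G xs] by (simp add: a_def)
  then have "(L - good_count G xs) * (2 * a + 1) \<le> L * (2 * (length xs + 1))"
    by (intro mult_mono) auto
  moreover have "(Suc a)\<^sup>2 = a\<^sup>2 + (2 * a + 1)" by (simp add: power2_eq_square)
  ultimately show ?thesis
    using assms by (simp add: list_potential_def bad_ahead_sq_sum_snoc good_count_snoc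
        bad_count_snoc a_def algebra_simps)
qed

lemma list_potential_bad_mtf:
  assumes "x \<in> set xs" and "good_count G xs \<le> L"
  shows "list_potential L G (mtf x xs) \<le> list_potential L G xs + 2 * L * depth x xs"
proof (cases "x \<in> G")
  case True
  then show ?thesis using list_potential_good_mtf[OF True assms(1), of L] by linarith
next
  case False
  have "bad_ahead_sq_sum G 0 (mtf x xs) = bad_ahead_sq_sum G 1 (remove1 x xs)"
    using False by (simp add: mtf_def)
  also have "\<dots> \<le> bad_ahead_sq_sum G 0 xs + 2 * good_count G xs * depth x xs"
    using bad_ahead_sq_sum_remove1_bad[OF False assms(1), of 0] by simp
  also have "\<dots> \<le> bad_ahead_sq_sum G 0 xs + 2 * L * depth x xs"
    using assms(2) by simp
  finally show ?thesis
    using assms(1) by (simp add: list_potential_def good_count_mtf bad_count_mtf)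
qed

definition potential :: "nat \<Rightarrow> nat \<Rightarrow> st \<Rightarrow> nat" where
  "potential t L s = (\<Sum>i<t. list_potential L (goodobj s) (tab s i))"

definition wf_state :: "st \<Rightarrow> bool" where
  "wf_state s \<longleftrightarrow> goodobj s \<subseteq> allobj s \<and> (\<forall>i. set (tab s i) \<subseteq> allobj s)"

lemma potential_update:
  assumes "i < t"
    and "\<And>j. j < t \<Longrightarrow> j \<noteq> i \<Longrightarrow>
           list_potential L (goodobj s') (tab s' j) = list_potential L (goodobj s) (tab s j)"
  shows "potential t L s' + list_potential L (goodobj s) (tab s i)
       = potential t L s + list_potential L (goodobj s') (tab s' i)"
proof -
  have "(\<Sum>j\<in>{..<t} - {i}. list_potential L (goodobj s') (tab s' j))
      = (\<Sum>j\<in>{..<t} - {i}. list_potential L (goodobj s) (tab s j))"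
    using assms(2) by (intro sum.cong) auto
  then show ?thesis
    using assms(1) by (simp add: potential_def sum.remove)
qed

lemma potential_GIns:
  assumes "wf_state s" "i < t" "x \<notin> allobj s" "good_count (goodobj s) (tab s i) < L"
  shows "potential t L (step s (GIns x i)) + (bad_count (goodobj s) (tab s i))\<^sup>2 = potential t L s"
proof -
  have fresh: "x \<notin> set (tab s j)" for j
    using assms(1,3) by (auto simp: wf_state_def)
  have "potential t L (step s (GIns x i)) + list_potential L (goodobj s) (tab s i)
      = potential t L s + list_potential L (insert x (goodobj s)) (tab s i @ [x])"
    using potential_update[OF assms(2), of L "step s (GIns x i)" s]
    by (simp add: list_potential_insert_notin[OF fresh])
  then show ?thesis
    using list_potential_good_snoc[OF fresh assms(4)] by linarith
qed

lemma potential_GQry: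
  assumes "i < t" "x \<in> goodobj s" "x \<in> set (tab s i)"
  shows "potential t L (step s (GQry x i)) + (bad_ahead x (goodobj s) (tab s i))\<^sup>2 = potential t L s"
  using potential_update[OF assms(1), of L "step s (GQry x i)" s]
    list_potential_good_mtf[OF assms(2,3), of L] by simp

lemma potential_BIns:
  assumes "wf_state s" "i < t" "x \<notin> allobj s"
  shows "potential t L (step s (BIns x i)) \<le> potential t L s + 4 * L * (length (tab s i) + 1)"
proof -
  have "x \<notin> goodobj s" using assms(1,3) by (auto simp: wf_state_def)
  then show ?thesis
    using potential_update[OF assms(2), of L "step s (BIns x i)" s]
      list_potential_bad_snoc[of x "goodobj s" L "tab s i"] by simp
qed

lemma potential_BQry:
  assumes "i < t" "x \<in> set (tab s i)" "good_count (goodobj s) (tab s i) \<le> L"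
  shows "potential t L (step s (BQry x i)) \<le> potential t L s + 2 * L * depth x (tab s i)"
  using potential_update[OF assms(1), of L "step s (BQry x i)" s]
    list_potential_bad_mtf[OF assms(2,3)] by simp

lemma cauchy_schwarz_step:
  fixes A S N a :: nat
  assumes "A\<^sup>2 \<le> N * S"
  shows "(A + a)\<^sup>2 \<le> (N + 1) * (S + a\<^sup>2)"
proof (cases "N = 0")
  case True
  then show ?thesis using assms by simp
next
  case False
  have "real N * (2 * A * a) \<le> real N * real N * (real a)\<^sup>2 + (real A)\<^sup>2"
    using sum_power2_ge_zero[of "real N * real a - real A" 0]
    by (simp add: power2_eq_square algebra_simps)
  then have "N * (2 * A * a) \<le> N * N * a\<^sup>2 + A\<^sup>2"
    by (metis of_nat_le_iff of_nat_add of_nat_mult of_nat_power of_nat_numeral)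
  also have "\<dots> \<le> N * (N * a\<^sup>2 + S)" using assms by (simp add: algebra_simps)
  finally have "2 * A * a \<le> N * a\<^sup>2 + S" using False by simp
  then show ?thesis using assms by (simp add: power2_eq_square algebra_simps)
qed

text \<open>A is the total number of bad objects ahead over all good requests so far and S the sum of
  their squares.\<close>
definition amortized_inv :: "nat \<Rightarrow> nat \<Rightarrow> st \<Rightarrow> bool" where
  "amortized_inv t L s \<longleftrightarrow> lat s \<le> algc s \<and>
     (\<exists>A S. algc s \<le> (nI s + nQ s) * L + A \<and> A\<^sup>2 \<le> (nI s + nQ s) * S \<and>
            S + potential t L s \<le> 4 * L * advc s)"

lemma amortized_inv_good_step:
  assumes "amortized_inv t L s"
    and "nI s' + nQ s' = Suc (nI s + nQ s)" "advc s' = advc s"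
    and "algc s' \<le> algc s + L + a" "lat s' + algc s \<le> lat s + algc s'"
    and "potential t L s' + a\<^sup>2 \<le> potential t L s"
  shows "amortized_inv t L s'"
proof -
  obtain A S where "algc s \<le> (nI s + nQ s) * L + A" "A\<^sup>2 \<le> (nI s + nQ s) * S"
      "S + potential t L s \<le> 4 * L * advc s"
    using assms(1) by (auto simp: amortized_inv_def)
  then have "algc s' \<le> (nI s' + nQ s') * L + (A + a)" "(A + a)\<^sup>2 \<le> (nI s' + nQ s') * (S + a\<^sup>2)"
      "(S + a\<^sup>2) + potential t L s' \<le> 4 * L * advc s'"
    using assms(2-6) cauchy_schwarz_step[of A "nI s + nQ s" S a] by auto
  moreover have "lat s' \<le> algc s'" using assms(1,5) by (simp add: amortized_inv_def)
  ultimately show ?thesis unfolding amortized_inv_def by blast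
qed

lemma amortized_inv_bad_step:
  assumes "amortized_inv t L s"
    and "nI s' = nI s" "nQ s' = nQ s" "algc s' = algc s" "lat s' = lat s"
    and "potential t L s' + 4 * L * advc s \<le> potential t L s + 4 * L * advc s'"
  shows "amortized_inv t L s'"
proof -
  obtain A S where "algc s \<le> (nI s + nQ s) * L + A" "A\<^sup>2 \<le> (nI s + nQ s) * S"
      "S + potential t L s \<le> 4 * L * advc s"
    using assms(1) by (auto simp: amortized_inv_def)
  then show ?thesis
    using assms unfolding amortized_inv_def by (intro conjI exI[of _ A] exI[of _ S]) auto
qed

lemma amortized_inv_step:
  assumes wf: "wf_state s" and legal: "legal t s op"
    and bounded: "\<forall>j<t. good_count (goodobj (step s op)) (tab (step s op) j) \<le> L"
    and inv: "amortized_inv t L s"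
  shows "amortized_inv t L (step s op)"
proof (cases op)
  case (GIns x i)
  let ?G = "goodobj s" and ?xs = "tab s i"
  have "x \<notin> set ?xs" using wf legal GIns by (auto simp: wf_state_def)
  then have "good_count ?G ?xs < L"
    using bounded legal GIns by (auto simp: good_count_snoc good_count_insert_notin)
  then show ?thesis
    using amortized_inv_good_step[OF inv, of _ "bad_count ?G ?xs"] potential_GIns[of s i t x L]
      good_count_plus_bad_count[of ?G ?xs] wf legal GIns by simp
next
  case (GQry x i)
  let ?G = "goodobj s" and ?xs = "tab s i"
  have "depth x ?xs \<le> L + bad_ahead x ?G ?xs"
    using depth_le_good_count_plus_bad_ahead[of x ?G ?xs] bounded legal GQry
    by (auto simp: good_count_mtf)
  then show ?thesis
    using amortized_inv_good_step[OF inv, of _ "bad_ahead x ?G ?xs"] potential_GQry[of i t x s L]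
      legal GQry by simp
next
  case (BIns x i)
  then show ?thesis
    using amortized_inv_bad_step[OF inv] potential_BIns[of s i t x L] wf legal
    by (simp add: algebra_simps)
next
  case (BQry x i)
  have "good_count (goodobj s) (tab s i) \<le> L" using bounded legal BQry by (auto simp: good_count_mtf)
  then show ?thesis
    using amortized_inv_bad_step[OF inv] potential_BQry[of i t x s L] legal BQry
    by (simp add: algebra_simps)
next
  case (BQryAbs i)
  then show ?thesis
    using amortized_inv_bad_step[OF inv] by (simp add: potential_def)
qed

lemma wf_state_step: "wf_state s \<Longrightarrow> legal t s op \<Longrightarrow> wf_state (step s op)"
  by (cases op) (auto simp: wf_state_def set_mtf)

lemma good_count_step_mono:
  "legal t s op \<Longrightarrow>
     good_count (goodobj s) (tab s j) \<le> good_count (goodobj (step s op)) (tab (step s op) j)"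
  by (cases op) (auto simp: good_count_mtf good_count_snoc intro: le_SucI good_count_mono)

lemma valid_run_snoc: "valid_run t (ops @ [op]) \<longleftrightarrow> valid_run t ops \<and> legal t (run ops) op"
  by (auto simp: valid_run_def nth_append less_Suc_eq)

lemma run_snoc: "run (ops @ [op]) = step (run ops) op"
  by (simp add: run_def)

lemma run_invariants:
  "valid_run t ops \<Longrightarrow> \<forall>i<t. good_count (goodobj (run ops)) (tab (run ops) i) \<le> L \<Longrightarrow>
     wf_state (run ops) \<and> amortized_inv t L (run ops)"
proof (induction ops rule: rev_induct)
  case Nil
  then show ?case
    by (simp add: run_def init_def wf_state_def amortized_inv_def potential_def list_potential_def
        good_count_def bad_count_def)
next
  case (snoc op ops)
  then have legal: "legal t (run ops) op" and "valid_run t ops" by (simp_all add: valid_run_snoc)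
  moreover have "\<forall>i<t. good_count (goodobj (run ops)) (tab (run ops) i) \<le> L"
    using snoc.prems(2) good_count_step_mono[OF legal] by (auto simp: run_snoc intro: order_trans)
  ultimately have "wf_state (run ops) \<and> amortized_inv t L (run ops)" using snoc.IH by blast
  then show ?case
    using wf_state_step amortized_inv_step legal snoc.prems(2) by (simp add: run_snoc)
qed

lemma cost_bound_of_cauchy_schwarz:
  fixes c A S N L B :: nat
  assumes "c \<le> N * L + A" "A\<^sup>2 \<le> N * S" "S \<le> 4 * L * B"
  shows "real c \<le> 2 * (real N + sqrt (real N * real B)) * (real L)\<^sup>2"
proof -
  have L_le_sq: "real L \<le> (real L)\<^sup>2"
    by (metis le_square of_nat_le_iff of_nat_mult power2_eq_square)
  have sqrt_le_sq: "sqrt (real L) \<le> (real L)\<^sup>2"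
    using real_le_lsqrt[OF of_nat_0_le_iff L_le_sq] L_le_sq by linarith
  have "A\<^sup>2 \<le> 4 * L * (N * B)" using assms(2,3) by (metis le_trans mult.left_commute mult_le_mono2)
  then have "(real A)\<^sup>2 \<le> 4 * real L * (real N * real B)"
    by (metis of_nat_le_iff of_nat_mult of_nat_numeral of_nat_power)
  then have "real A \<le> sqrt (4 * real L * (real N * real B))" by (rule real_le_rsqrt)
  also have "\<dots> = 2 * sqrt (real L) * sqrt (real N * real B)" by (simp add: real_sqrt_mult)
  also have "\<dots> \<le> 2 * (real L)\<^sup>2 * sqrt (real N * real B)"
    by (intro mult_right_mono) (use sqrt_le_sq in linarith, simp)
  finally have "real A \<le> 2 * (real L)\<^sup>2 * sqrt (real N * real B)" .
  moreover have "real N * real L \<le> real N * (real L)\<^sup>2" using L_le_sq by (simp add: mult_left_mono)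
  moreover have "real c \<le> real N * real L + real A"
    using assms(1) by (metis of_nat_add of_nat_le_iff of_nat_mult)
  moreover have "2 * (real N + sqrt (real N * real B)) * (real L)\<^sup>2
      = 2 * (real N * (real L)\<^sup>2) + 2 * (real L)\<^sup>2 * sqrt (real N * real B)"
    by (simp add: algebra_simps)
  moreover have "0 \<le> real N * (real L)\<^sup>2" by simp
  ultimately show ?thesis by linarith
qed

theorem lemma7:
  "\<exists>c > (0::real). \<forall>t ops. 0 < t \<longrightarrow> valid_run t ops \<longrightarrow>
     (let s = run ops; N = real (nI s) + real (nQ s);
          bound = c * (N + sqrt (N * real (advc s))) * real (ellM t s) ^ 2
      in real (algc s) \<le> bound \<and> real (lat s) \<le> bound)"
proof (intro exI[of _ 2] conjI allI impI)
  fix t ops assume "0 < t" and valid: "valid_run t ops"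
  define s where "s = run ops"
  have "\<forall>i<t. good_count (goodobj s) (tab s i) \<le> ellM t s"
    by (auto simp: ellM_def good_count_def intro: Max_ge)
  then have "amortized_inv t (ellM t s) s" using run_invariants[OF valid] by (simp add: s_def)
  then obtain A S where "lat s \<le> algc s" "algc s \<le> (nI s + nQ s) * ellM t s + A"
      "A\<^sup>2 \<le> (nI s + nQ s) * S" "S \<le> 4 * ellM t s * advc s"
    unfolding amortized_inv_def by auto
  then have "real (algc s) \<le> 2 * (real (nI s + nQ s) + sqrt (real (nI s + nQ s) * real (advc s)))
      * (real (ellM t s))\<^sup>2"
    by (intro cost_bound_of_cauchy_schwarz)
  moreover have "real (lat s) \<le> real (algc s)" using \<open>lat s \<le> algc s\<close> by simp
  ultimately show "let s = run ops; N = real (nI s) + real (nQ s);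
          bound = 2 * (N + sqrt (N * real (advc s))) * real (ellM t s) ^ 2
      in real (algc s) \<le> bound \<and> real (lat s) \<le> bound"
    by (simp add: Let_def s_def [symmetric])
qed simp

end
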